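(* Let $a,n\in\mathbb{N}$, $k_1,\ldots,k_n\in\mathbb{N}$, $K=\operatorname{lcm}(k_1,\ldots,k_n)$, let $f_1,\ldots,f_n,g_1,\ldots,g_n$ be arbitrary arithmetic functions, and put $H(m)=\prod_{i=1}^n s^{(1)}_{f_i,g_i,\mathbf 1}(k_i,m)$. For $N\in\mathbb{N}$ let $\Psi^{(a)}(N)=\sum_{1\le\ell\le N^a,\ (\ell,N^a)_a=1}\omega(\ell)$ and $\Phi^{(a)}(N)=\#\{\ell\in\{1,\ldots,N^a\}:(\ell,N^a)_a=1\}$. (i) If $\omega$ is completely multiplicative, then $\sum_{j=1}^{K^a}\omega(j)\prod_{i=1}^n s^{(a)}_{f_i,g_i,\mathbf 1}(k_i,j)=\sum_{d|K}\omega(d)^a H(d)\Psi^{(a)}(K/d)$. (ii) If $\omega$ is completely additive, then $\sum_{j=1}^{K^a}\omega(j)\prod_{i=1}^n s^{(a)}_{f_i,g_i,\mathbf 1}(k_i,j)=\sum_{d|K}\omega(d^a)H(d)\Phi^{(a)}(K/d)+\sum_{d|K}H(d)\Psi^{(a)}(K/d)$.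
   Context: An arithmetic function is a map $\mathbb{N}\to\mathbb{C}$. For $a\in\mathbb{N}$, $s^{(a)}_{f,g,\mathbf 1}(k,j)=\sum_{d|k,\ d^a|j} f(d)\,g(k/d)$ (so $s^{(1)}_{f,g,\mathbf 1}(k,j)=\sum_{d|\gcd(k,j)}f(d)g(k/d)$). For $j,N\in\mathbb{N}$, the generalized gcd $(j,N^a)_a$ is the largest $d\in\mathbb{N}$ with $d|N$ and $d^a|j$. $\omega$ is completely multiplicative if $\omega(1)=1$ and $\omega(mn)=\omega(m)\omega(n)$; completely additive if $\omega(mn)=\omega(m)+\omega(n)$. *)

theory Defs
  imports Main "HOL-Computational_Algebra.Primes" Complex_Main
begin

definition sfun :: "nat \<Rightarrow> (nat \<Rightarrow> complex) \<Rightarrow> (nat \<Rightarrow> complex) \<Rightarrow> nat \<Rightarrow> nat \<Rightarrow> complex" where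
  "sfun a f g k j = (\<Sum>d\<in>{d. d dvd k \<and> d ^ a dvd j}. f d * g (k div d))"

text \<open>Generalized gcd (j, N^a)_a: the largest d with d | N and d^a | j.\<close>
definition gen_gcd :: "nat \<Rightarrow> nat \<Rightarrow> nat \<Rightarrow> nat" where
  "gen_gcd a j N = Max {d. d dvd N \<and> d ^ a dvd j}"

definition compl_mult :: "(nat \<Rightarrow> complex) \<Rightarrow> bool" where
  "compl_mult w \<longleftrightarrow> w 1 = 1 \<and> (\<forall>m n. m > 0 \<longrightarrow> n > 0 \<longrightarrow> w (m * n) = w m * w n)"

definition compl_add :: "(nat \<Rightarrow> complex) \<Rightarrow> bool" where
  "compl_add w \<longleftrightarrow> (\<forall>m n. m > 0 \<longrightarrow> n > 0 \<longrightarrow> w (m * n) = w m + w n)"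

definition Psi :: "nat \<Rightarrow> (nat \<Rightarrow> complex) \<Rightarrow> nat \<Rightarrow> complex" where
  "Psi a w N = (\<Sum>l\<in>{l\<in>{1..N ^ a}. gen_gcd a l N = 1}. w l)"

definition Phi :: "nat \<Rightarrow> nat \<Rightarrow> nat" where
  "Phi a N = card {l\<in>{1..N ^ a}. gen_gcd a l N = 1}"

end

theory Submission
  imports Defs
begin

text \<open>
  For a divisor d of K one has d^a | j iff d | D, where D = (j, K^a)_a; hence
  s^(a)(k_i, j) = s^(1)(k_i, D) and the product over i is H(D). Grouping the terms by
  D = d, the j in {1..K^a} with (j, K^a)_a = d are exactly the d^a l with l in {1..(K/d)^a}
  and (l, (K/d)^a)_a = 1. The left-hand side is therefore the sum over d | K of H(d) times
  the sum of w(d^a l) over these l, and it remains to split w(d^a l) as w(d)^a w(l),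
  respectively w(d^a) + w(l).
\<close>

lemma lcm_power_nat: "lcm x y ^ n = lcm (x ^ n) (y ^ n :: nat)"
proof -
  have "gcd x y dvd x * y"
    by (simp add: dvd_mult)
  then show ?thesis
    by (simp add: lcm_nat_def div_power power_mult_distrib)
qed

definition gen_coprimes :: "nat \<Rightarrow> nat \<Rightarrow> nat set" where
  "gen_coprimes a N = {l \<in> {1..N ^ a}. gen_gcd a l N = 1}"

lemma Psi_gen_coprimes: "Psi a w N = (\<Sum>l\<in>gen_coprimes a N. w l)"
  by (simp add: Psi_def gen_coprimes_def)

lemma Phi_gen_coprimes: "Phi a N = card (gen_coprimes a N)"
  by (simp add: Phi_def gen_coprimes_def)

lemma gen_coprimes_pos: "l \<in> gen_coprimes a N \<Longrightarrow> l > 0"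
  by (auto simp: gen_coprimes_def)

lemma
  assumes "N > 0" "j > 0"
  shows gen_gcd_dvd: "gen_gcd a j N dvd N"
    and gen_gcd_power_dvd: "gen_gcd a j N ^ a dvd j"
    and dvd_gen_gcd: "\<And>e. e dvd N \<Longrightarrow> e ^ a dvd j \<Longrightarrow> e dvd gen_gcd a j N"
proof -
  let ?S = "{d. d dvd N \<and> d ^ a dvd j}"
  let ?D = "gen_gcd a j N"
  have fin: "finite ?S"
    using \<open>N > 0\<close> by (auto intro: finite_subset[of _ "{..N}"] dvd_imp_le)
  have "1 \<in> ?S"
    by simp
  then have "?D \<in> ?S"
    unfolding gen_gcd_def using fin Max_in by blast
  then show D: "?D dvd N" "?D ^ a dvd j" by auto
  fix e assume e: "e dvd N" "e ^ a dvd j"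
  have "lcm e ?D \<in> ?S"
    using e D by (simp add: lcm_power_nat)
  then have "lcm e ?D \<le> ?D"
    unfolding gen_gcd_def using fin by simp
  moreover have "lcm e ?D > 0"
    using e D \<open>N > 0\<close> by (meson dvd_pos_nat lcm_pos_nat)
  ultimately have "lcm e ?D = ?D"
    using dvd_imp_le[OF dvd_lcm2[of ?D e]] by simp
  then show "e dvd ?D"
    by (metis dvd_lcm1)
qed

lemma gen_gcd_eqI:
  assumes "N > 0" "j > 0" "D dvd N" "D ^ a dvd j"
    and "\<And>e. e dvd N \<Longrightarrow> e ^ a dvd j \<Longrightarrow> e dvd D"
  shows "gen_gcd a j N = D"
  using assms gen_gcd_dvd gen_gcd_power_dvd dvd_gen_gcd by (metis dvd_antisym)

lemma power_dvd_iff_dvd_gen_gcd: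
  assumes "N > 0" "j > 0" "d dvd N"
  shows "d ^ a dvd j \<longleftrightarrow> d dvd gen_gcd a j N"
  using assms dvd_gen_gcd gen_gcd_power_dvd by (metis dvd_power_same dvd_trans)

lemma sfun_gen_gcd:
  assumes "N > 0" "j > 0" "k dvd N"
  shows "sfun a f g k j = sfun 1 f g k (gen_gcd a j N)"
proof -
  have "{d. d dvd k \<and> d ^ a dvd j} = {d. d dvd k \<and> d ^ 1 dvd gen_gcd a j N}"
    using assms power_dvd_iff_dvd_gen_gcd[OF assms(1,2)] dvd_trans by auto
  then show ?thesis
    unfolding sfun_def by simp
qed

lemma gen_gcd_fibre:
  assumes "N = d * m" "d > 0" "m > 0"
  shows "{j \<in> {1..N ^ a}. gen_gcd a j N = d} = (\<lambda>l. d ^ a * l) ` gen_coprimes a m"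
proof (intro equalityI subsetI)
  have N0: "N > 0" using assms by simp
  fix j assume "j \<in> {j \<in> {1..N ^ a}. gen_gcd a j N = d}"
  then have j: "j > 0" "j \<le> N ^ a" "gen_gcd a j N = d" by auto
  then obtain l where l: "j = d ^ a * l"
    using gen_gcd_power_dvd[OF N0 \<open>j > 0\<close>] by (auto elim: dvdE)
  have "l > 0" "l \<le> m ^ a"
    using j l assms by (auto simp: power_mult_distrib)
  moreover have "gen_gcd a l m = 1"
  proof (rule gen_gcd_eqI)
    fix e assume "e dvd m" "e ^ a dvd l"
    then have "d * e dvd N" "(d * e) ^ a dvd j"
      using l assms by (auto simp: power_mult_distrib)
    then have "d * e dvd d"
      using dvd_gen_gcd[OF N0 \<open>j > 0\<close>] j by metis
    then show "e dvd 1" using assms by simp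
  qed (use \<open>l > 0\<close> assms in auto)
  ultimately show "j \<in> (\<lambda>l. d ^ a * l) ` gen_coprimes a m"
    using l by (auto simp: gen_coprimes_def)
next
  have N0: "N > 0" using assms by simp
  fix j assume "j \<in> (\<lambda>l. d ^ a * l) ` gen_coprimes a m"
  then obtain l where "l \<in> gen_coprimes a m" and j: "j = d ^ a * l"
    by blast
  then have l: "l > 0" "l \<le> m ^ a" "gen_gcd a l m = 1"
    by (auto simp: gen_coprimes_def)
  have "gen_gcd a j N = d"
  proof (rule gen_gcd_eqI)
    fix e assume e: "e dvd N" "e ^ a dvd j"
    \<comment> \<open>Write lcm e d = d t; then t | m and t^a | l, so t | (l, m^a)_a = 1.\<close>
    obtain t where t: "lcm e d = d * t"
      by (metis dvd_lcm2 dvdE)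
    have "lcm e d dvd N" "lcm e d ^ a dvd j"
      using e assms j by (simp_all add: lcm_power_nat lcm_least)
    then have "d * t dvd d * m" "d ^ a * t ^ a dvd d ^ a * l"
      using t assms j by (simp_all add: power_mult_distrib)
    then have "t dvd m" "t ^ a dvd l"
      using assms by simp_all
    then have "t dvd gen_gcd a l m"
      using dvd_gen_gcd assms(3) l(1) by blast
    then show "e dvd d"
      using t l by (metis dvd_lcm1 mult.right_neutral nat_dvd_1_iff_1)
  qed (use assms l j in auto)
  moreover have "j \<in> {1..N ^ a}"
    using l j assms by (simp add: power_mult_distrib)
  ultimately show "j \<in> {j \<in> {1..N ^ a}. gen_gcd a j N = d}"
    by simp
qed

lemma sum_by_gen_gcd:
  fixes h :: "nat \<Rightarrow> nat \<Rightarrow> 'b :: comm_monoid_add"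
  assumes "N > 0"
  shows "(\<Sum>j=1..N ^ a. h j (gen_gcd a j N))
       = (\<Sum>d\<in>{d. d dvd N}. \<Sum>l\<in>gen_coprimes a (N div d). h (d ^ a * l) d)"
proof -
  have "(\<Sum>j=1..N ^ a. h j (gen_gcd a j N))
      = (\<Sum>d\<in>{d. d dvd N}. \<Sum>j\<in>{j \<in> {1..N ^ a}. gen_gcd a j N = d}. h j d)"
    by (subst sum.group[symmetric, where g = "\<lambda>j. gen_gcd a j N"])
       (use assms gen_gcd_dvd in \<open>auto intro!: sum.cong\<close>)
  also have "\<dots> = (\<Sum>d\<in>{d. d dvd N}. \<Sum>l\<in>gen_coprimes a (N div d). h (d ^ a * l) d)"
  proof (rule sum.cong[OF refl])
    fix d assume "d \<in> {d. d dvd N}"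
    then have "N = d * (N div d)" "d > 0" "N div d > 0"
      using assms by (auto intro: Nat.gr0I)
    then show "(\<Sum>j\<in>{j \<in> {1..N ^ a}. gen_gcd a j N = d}. h j d)
             = (\<Sum>l\<in>gen_coprimes a (N div d). h (d ^ a * l) d)"
      by (subst gen_gcd_fibre) (auto simp: sum.reindex inj_on_def)
  qed
  finally show ?thesis .
qed

lemma compl_mult_power:
  assumes "compl_mult w" "d > 0"
  shows "w (d ^ m) = w d ^ m"
  using assms by (induction m) (auto simp: compl_mult_def)

lemma sum_gen_coprimes_compl_mult:
  assumes "compl_mult w" "d > 0"
  shows "(\<Sum>l\<in>gen_coprimes a N. w (d ^ a * l)) = w d ^ a * Psi a w N"
proof -
  have "w (d ^ a * l) = w d ^ a * w l" if "l \<in> gen_coprimes a N" for l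
    using assms gen_coprimes_pos[OF that] compl_mult_power[OF assms]
    unfolding compl_mult_def by simp
  then show ?thesis
    by (simp add: Psi_gen_coprimes sum_distrib_left)
qed

lemma sum_gen_coprimes_compl_add:
  assumes "compl_add w" "c > 0"
  shows "(\<Sum>l\<in>gen_coprimes a N. w (c * l)) = w c * of_nat (Phi a N) + Psi a w N"
proof -
  have "w (c * l) = w c + w l" if "l \<in> gen_coprimes a N" for l
    using assms gen_coprimes_pos[OF that] unfolding compl_add_def by simp
  then show ?thesis
    by (simp add: Psi_gen_coprimes Phi_gen_coprimes sum.distrib mult.commute)
qed

theorem mainTheorem9:
  fixes a n :: nat and k :: "nat \<Rightarrow> nat" and f g :: "nat \<Rightarrow> nat \<Rightarrow> complex"
    and w :: "nat \<Rightarrow> complex" and K :: nat and H :: "nat \<Rightarrow> complex"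
  assumes "a \<ge> 1" and "n \<ge> 1" and "\<forall>i\<in>{1..n}. k i \<ge> 1"
    and "K = Lcm (k ` {1..n})"
    and "H = (\<lambda>m. \<Prod>i=1..n. sfun 1 (f i) (g i) (k i) m)"
  shows "(compl_mult w \<longrightarrow>
            (\<Sum>j=1..K ^ a. w j * (\<Prod>i=1..n. sfun a (f i) (g i) (k i) j))
          = (\<Sum>d\<in>{d. d dvd K}. w d ^ a * H d * Psi a w (K div d)))
       \<and> (compl_add w \<longrightarrow>
            (\<Sum>j=1..K ^ a. w j * (\<Prod>i=1..n. sfun a (f i) (g i) (k i) j))
          = (\<Sum>d\<in>{d. d dvd K}. w (d ^ a) * H d * of_nat (Phi a (K div d)))
            + (\<Sum>d\<in>{d. d dvd K}. H d * Psi a w (K div d)))"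
proof -
  have "0 \<notin> k ` {1..n}"
    using assms(3) by force
  then have "K > 0"
    using assms(4) Lcm_0_iff[of "k ` {1..n}"] by (simp del: Lcm_0_iff_nat)
  have "(\<Sum>j=1..K ^ a. w j * (\<Prod>i=1..n. sfun a (f i) (g i) (k i) j))
      = (\<Sum>j=1..K ^ a. w j * H (gen_gcd a j K))" (is "?lhs = _")
    using sfun_gen_gcd[OF \<open>K > 0\<close>] assms(4,5) by (intro sum.cong) auto
  also have "\<dots> = (\<Sum>d\<in>{d. d dvd K}. H d * (\<Sum>l\<in>gen_coprimes a (K div d). w (d ^ a * l)))"
    using sum_by_gen_gcd[OF \<open>K > 0\<close>, of "\<lambda>j d. w j * H d" a]
    by (simp add: sum_distrib_left mult_ac)
  finally have lhs: "?lhs = \<dots>" .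
  have pos: "d > 0" if "d \<in> {d. d dvd K}" for d
    using that \<open>K > 0\<close> by (auto intro: Nat.gr0I)
  show ?thesis
  proof (intro conjI impI)
    assume "compl_mult w"
    have "H d * (\<Sum>l\<in>gen_coprimes a (K div d). w (d ^ a * l)) = w d ^ a * H d * Psi a w (K div d)"
      if "d \<in> {d. d dvd K}" for d
      using sum_gen_coprimes_compl_mult[OF \<open>compl_mult w\<close> pos[OF that]] by simp
    then show "?lhs = (\<Sum>d\<in>{d. d dvd K}. w d ^ a * H d * Psi a w (K div d))"
      unfolding lhs by (rule sum.cong[OF refl])
  next
    assume "compl_add w"
    have "H d * (\<Sum>l\<in>gen_coprimes a (K div d). w (d ^ a * l))
        = w (d ^ a) * H d * of_nat (Phi a (K div d)) + H d * Psi a w (K div d)"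
      if "d \<in> {d. d dvd K}" for d
      using sum_gen_coprimes_compl_add[OF \<open>compl_add w\<close>, of "d ^ a"] pos[OF that]
      by (simp add: algebra_simps)
    then show "?lhs = (\<Sum>d\<in>{d. d dvd K}. w (d ^ a) * H d * of_nat (Phi a (K div d)))
            + (\<Sum>d\<in>{d. d dvd K}. H d * Psi a w (K div d))"
      unfolding lhs sum.distrib[symmetric] by (rule sum.cong[OF refl])
  qed
qed

end
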